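(* Let $(\mathcal{G}(u_0,v_0),-\Omega^2\,du\,dv)$ with radial function $r$ and stress-energy components $T_{uu},T_{uv},T_{vv}$ be as described in the context, satisfying assumptions (I)–(VII), and suppose there is $\delta>0$ such that, with $\mathcal{W}=\mathcal{W}(\delta)$, condition (A), $T_{uv}\Omega^{-2}<\frac1{4r^2}$, holds on $\mathcal{A}\cap\mathcal{W}$. If $\mathcal{A}\cap\mathcal{W}\neq\emptyset$, then $\mathcal{A}\cap\mathcal{W}$ is connected and terminates (i.e. its future limit point in $\overline{K}(u_0,v_0)$ lies) either at $i^+=(0,\infty)$, in which case it is asymptotic to the event horizon, or on the Cauchy horizon $(0,u_0]\times\{\infty\}\subset\overline{K}(u_0,v_0)$. In the latter case, $\mathcal{W}\cap\mathcal{R}$ contains a rectangle $K(u_1,v_1)=[0,u_1]\times[v_1,\infty)$ for some $u_1\in(0,u_0]$, $v_1\in[v_0,\infty)$.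
   Context: Fix double null coordinates $(u,v)$ on $\mathbb{R}^2$ with Minkowski metric $-du\,dv$, time-oriented so that $u,v$ increase toward the future. For $u,v>0$, $K(u,v)=[0,u]\times[v,\infty)$; $\overline{K}(u_0,v_0)=[0,u_0]\times[v_0,\infty]$. Fix $u_0,v_0>0$, $\mathcal{C}_{in}=[0,u_0]\times\{v_0\}$, $\mathcal{C}_{out}=\{0\}\times[v_0,\infty)$ (the event horizon); causal notions refer to $K(u_0,v_0)$. Let $\mathcal{G}(u_0,v_0)\subset K(u_0,v_0)$ be globally hyperbolic, relatively open, containing $\mathcal{C}_{in}\cup\mathcal{C}_{out}$, with metric $-\Omega^2du\,dv$ ($\Omega>0$ smooth), smooth $r\ge0$ with $r>0$ on $\mathcal{C}_{in}\cup\mathcal{C}_{out}$, and smooth $T_{uu},T_{uv},T_{vv}$ (stress-energy components of the spherically symmetric spacetime $-\Omega^2du\,dv+r^2g_{S^2}$) satisfying $\partial_u(\Omega^{-2}\partial_u r)=-r\Omega^{-2}T_{uu}$, $\partial_v(\Omega^{-2}\partial_v r)=-r\Omega^{-2}T_{vv}$, $\partial_u m=2r^2\Omega^{-2}(T_{uv}\partial_u r-T_{uu}\partial_v r)$, $\partial_v m=2r^2\Omega^{-2}(T_{uv}\partial_v r-T_{vv}\partial_u r)$, with $m=\frac r2(1+4\Omega^{-2}\partial_u r\partial_v r)$. Define $\mathcal{R}=\{\partial_v r>0,\partial_u r<0\}$, $\mathcal{T}=\{\partial_v r<0,\partial_u r<0\}$, $\mathcal{A}=\{\partial_v r=0,\partial_u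 r<0\}$, $r_+=\sup_{\mathcal{C}_{out}}r$, $m_+=\sup_{\mathcal{C}_{out}}m$, $\mathcal{W}(\delta)=\{(u,v)\in\mathcal{G}(u_0,v_0):r\ge r_+-\delta\}$. Assumptions: (I) $T_{uu},T_{uv},T_{vv}\ge0$; (II) $J^-(\mathcal{G}(u_0,v_0))\subset\mathcal{G}(u_0,v_0)$; (III) $r\le r_+<\infty$ on $\mathcal{C}_{out}$; (IV) $0\le m\le m_+<\infty$ on $\mathcal{C}_{out}$; (V) $\partial_u r<0$ on $\mathcal{C}_{out}$; (VI) $\partial_v r>0$ on $\mathcal{C}_{out}$; (VII) (closures in $K(u_0,v_0)$) if $p\in\overline{\mathcal{R}}$, $q\in\overline{\mathcal{R}}\cap I^-(p)$, $J^-(p)\cap J^+(q)\setminus\{p\}\subset\mathcal{R}\cup\mathcal{A}$, then $p\in\mathcal{R}\cup\mathcal{A}$. A subset of $\mathcal{A}$ is asymptotic to the event horizon if $i^+=(0,\infty)$ is a limit point of it in $\overline{K}(u_0,v_0)$. *)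

theory Defs
  imports "HOL-Analysis.Analysis"
begin

text \<open>Points of the quotient spacetime are pairs (u,v) of double null coordinates.\<close>

type_synonym pt = "real \<times> real"

definition Krect :: "real \<Rightarrow> real \<Rightarrow> pt set" where
  "Krect u v = {p. 0 \<le> fst p \<and> fst p \<le> u \<and> v \<le> snd p}"

text \<open>Causal / chronological past and future in K(u0,v0) (Minkowski metric -du dv,
  u and v increasing to the future; K is a product of intervals, so causal curves in K
  between two points exist iff the coordinates are ordered).\<close>
definition J_minus :: "real \<Rightarrow> real \<Rightarrow> pt \<Rightarrow> pt set" where
  "J_minus u0 v0 p = {q \<in> Krect u0 v0. fst q \<le> fst p \<and> snd q \<le> snd p}"

definition J_plus :: "real \<Rightarrow> real \<Rightarrow> pt \<Rightarrow> pt set" where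
  "J_plus u0 v0 p = {q \<in> Krect u0 v0. fst p \<le> fst q \<and> snd p \<le> snd q}"

definition I_minus :: "real \<Rightarrow> real \<Rightarrow> pt \<Rightarrow> pt set" where
  "I_minus u0 v0 p = {q \<in> Krect u0 v0. fst q < fst p \<and> snd q < snd p}"

definition causal_curve_in :: "pt set \<Rightarrow> (real \<Rightarrow> pt) \<Rightarrow> bool" where
  "causal_curve_in S \<gamma> \<longleftrightarrow> path \<gamma> \<and> path_image \<gamma> \<subseteq> S \<and>
     (\<forall>s t. 0 \<le> s \<longrightarrow> s \<le> t \<longrightarrow> t \<le> 1 \<longrightarrow>
        fst (\<gamma> s) \<le> fst (\<gamma> t) \<and> snd (\<gamma> s) \<le> snd (\<gamma> t))"

definition causal_le_in :: "pt set \<Rightarrow> pt \<Rightarrow> pt \<Rightarrow> bool" where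
  "causal_le_in S p q \<longleftrightarrow>
     (\<exists>\<gamma>. causal_curve_in S \<gamma> \<and> pathstart \<gamma> = p \<and> pathfinish \<gamma> = q)"

text \<open>Global hyperbolicity (causality is automatic for this causal structure, as
  causal curves are monotone): all causal diamonds are compact.\<close>
definition globally_hyperbolic :: "pt set \<Rightarrow> bool" where
  "globally_hyperbolic S \<longleftrightarrow>
     (\<forall>p\<in>S. \<forall>q\<in>S. compact {x. causal_le_in S p x \<and> causal_le_in S x q})"

definition pu :: "(pt \<Rightarrow> real) \<Rightarrow> pt \<Rightarrow> real" where
  "pu f p = deriv (\<lambda>s. f (s, snd p)) (fst p)"

definition pv :: "(pt \<Rightarrow> real) \<Rightarrow> pt \<Rightarrow> real" where
  "pv f p = deriv (\<lambda>t. f (fst p, t)) (snd p)"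

primrec pd :: "bool list \<Rightarrow> (pt \<Rightarrow> real) \<Rightarrow> pt \<Rightarrow> real" where
  "pd [] f = f"
| "pd (b # bs) f = (if b then pu (pd bs f) else pv (pd bs f))"

definition C_inf_on :: "pt set \<Rightarrow> (pt \<Rightarrow> real) \<Rightarrow> bool" where
  "C_inf_on U f \<longleftrightarrow> open U \<and>
     (\<forall>bs. continuous_on U (pd bs f) \<and>
        (\<forall>p\<in>U. (\<lambda>s. pd bs f (s, snd p)) differentiable (at (fst p)) \<and>
               (\<lambda>t. pd bs f (fst p, t)) differentiable (at (snd p))))"

text \<open>Smooth on an arbitrary (e.g. relatively open, with boundary) set: smooth on an
  open neighbourhood of it.\<close>
definition smooth_on :: "pt set \<Rightarrow> (pt \<Rightarrow> real) \<Rightarrow> bool" where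
  "smooth_on G f \<longleftrightarrow> (\<exists>U. G \<subseteq> U \<and> C_inf_on U f)"

definition hawking_mass :: "(pt \<Rightarrow> real) \<Rightarrow> (pt \<Rightarrow> real) \<Rightarrow> pt \<Rightarrow> real" where
  "hawking_mass \<Omega> r p = r p / 2 * (1 + 4 / (\<Omega> p)^2 * pu r p * pv r p)"

definition C_in :: "real \<Rightarrow> real \<Rightarrow> pt set" where
  "C_in u0 v0 = {p. 0 \<le> fst p \<and> fst p \<le> u0 \<and> snd p = v0}"

definition C_out :: "real \<Rightarrow> pt set" where
  "C_out v0 = {p. fst p = 0 \<and> v0 \<le> snd p}"

definition regR :: "pt set \<Rightarrow> (pt \<Rightarrow> real) \<Rightarrow> pt set" where
  "regR G r = {p \<in> G. pv r p > 0 \<and> pu r p < 0}"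

definition regT :: "pt set \<Rightarrow> (pt \<Rightarrow> real) \<Rightarrow> pt set" where
  "regT G r = {p \<in> G. pv r p < 0 \<and> pu r p < 0}"

definition regA :: "pt set \<Rightarrow> (pt \<Rightarrow> real) \<Rightarrow> pt set" where
  "regA G r = {p \<in> G. pv r p = 0 \<and> pu r p < 0}"

definition W_set :: "pt set \<Rightarrow> (pt \<Rightarrow> real) \<Rightarrow> real \<Rightarrow> real \<Rightarrow> pt set" where
  "W_set G r rplus \<delta> = {p \<in> G. r p \<ge> rplus - \<delta>}"

text \<open>A subset S of K(u0,v0) terminates (its future limit point in the compactification
  [0,u0] x [v0,infinity] lies) at the point (ustar, infinity): S reaches v = infinity and
  for large v its points converge to u = ustar.\<close>
definition terminates_at :: "pt set \<Rightarrow> real \<Rightarrow> bool" where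
  "terminates_at S ustar \<longleftrightarrow>
     (\<forall>V. \<exists>p\<in>S. snd p \<ge> V) \<and>
     (\<forall>\<epsilon>>0. \<exists>V. \<forall>p\<in>S. snd p \<ge> V \<longrightarrow> \<bar>fst p - ustar\<bar> < \<epsilon>)"

text \<open>i+ = (0,infinity) is a limit point of S in [0,u0] x [v0,infinity].\<close>
definition asymptotic_to_EH :: "pt set \<Rightarrow> bool" where
  "asymptotic_to_EH S \<longleftrightarrow> (\<forall>\<epsilon>>0. \<forall>V. \<exists>p\<in>S. fst p < \<epsilon> \<and> snd p > V)"

end

theory Submission
  imports Defs
begin

(*
  Raychaudhuri's equations with T_uu, T_vv >= 0, started from (V) on the event horizon, give
  d_u r < 0 everywhere and make d_v r / Omega^2 nonincreasing in v. Where d_v r = 0 the equation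
  for d_u m reads  d_u r (1/2 + 2 r d_u d_v r / Omega^2) = 2 r^2 T_uv d_u r / Omega^2, so condition (A)
  forces d_u d_v r < 0 on A /\ W: inside W, every zero of d_v r on an ingoing null line v = const is
  a transversal crossing from d_v r > 0 to d_v r < 0. Hence A /\ W meets each such line at most
  once, at u = gamma(v), with d_v r > 0 to its left. The set of these v is open to the right (by the
  monotonicity in v and the intermediate value theorem) and contains the limit of any increasing
  sequence of its points (by (VII), applied along the ingoing line through the limit point), so it
  is a half line. On it gamma is nonincreasing and continuous, so A /\ W is a connected curve ending
  at u* = inf gamma at v = infinity. If u* > 0, the rectangle [0, u*/2] x [v1, infinity) lies to the
  left of the curve, hence in R, and r there is at least its value on the curve, hence it lies in W.
*)

section \<open>Calculus on the double null plane\<close>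

lemma pd_pu: "pd bs (pu f) = pd (bs @ [True]) f"
  by (induction bs) auto

lemma pd_pv: "pd bs (pv f) = pd (bs @ [False]) f"
  by (induction bs) auto

lemma C_inf_on_pu: "C_inf_on U f \<Longrightarrow> C_inf_on U (pu f)"
  unfolding C_inf_on_def pd_pu by blast

lemma C_inf_on_pv: "C_inf_on U f \<Longrightarrow> C_inf_on U (pv f)"
  unfolding C_inf_on_def pd_pv by blast

lemma C_inf_on_subset: "C_inf_on U f \<Longrightarrow> open V \<Longrightarrow> V \<subseteq> U \<Longrightarrow> C_inf_on V f"
  unfolding C_inf_on_def by (auto intro: continuous_on_subset)

lemma C_inf_on_isCont: "C_inf_on U f \<Longrightarrow> p \<in> U \<Longrightarrow> isCont f p"
  unfolding C_inf_on_def by (metis continuous_on_eq_continuous_at pd.simps(1))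

lemma C_inf_on_has_deriv_u:
  "C_inf_on U f \<Longrightarrow> (u, v) \<in> U \<Longrightarrow> ((\<lambda>s. f (s, v)) has_real_derivative pu f (u, v)) (at u)"
  unfolding C_inf_on_def pu_def
  by (metis DERIV_deriv_iff_real_differentiable fst_conv pd.simps(1) snd_conv)

lemma C_inf_on_has_deriv_v:
  "C_inf_on U f \<Longrightarrow> (u, v) \<in> U \<Longrightarrow> ((\<lambda>t. f (u, t)) has_real_derivative pv f (u, v)) (at v)"
  unfolding C_inf_on_def pv_def
  by (metis DERIV_deriv_iff_real_differentiable fst_conv pd.simps(1) snd_conv)

lemma differentiable_divide_square:
  fixes f g :: "real \<Rightarrow> real"
  assumes "(f has_real_derivative a) (at x)" "(g has_real_derivative b) (at x)" "g x \<noteq> 0"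
  shows "(\<lambda>s. f s / (g s)^2) differentiable (at x)"
  unfolding real_differentiable_def
  using DERIV_divide[OF assms(1) DERIV_power[OF assms(2), of 2]] assms(3) by auto

lemma deriv_nonpos_imp_antimono:
  fixes h :: "real \<Rightarrow> real"
  assumes "a \<le> b" "\<And>x. a \<le> x \<Longrightarrow> x \<le> b \<Longrightarrow> h differentiable (at x) \<and> deriv h x \<le> 0"
  shows "h b \<le> h a"
proof (rule DERIV_nonpos_imp_nonincreasing[OF assms(1)])
  fix x assume "a \<le> x" "x \<le> b"
  then show "\<exists>y. (h has_real_derivative y) (at x) \<and> y \<le> 0"
    using assms(2) DERIV_deriv_iff_real_differentiable by blast
qed

lemma neg_persists_through_downcrossing_zeros:
  fixes f :: "real \<Rightarrow> real"
  assumes cont: "continuous_on {a..b} f"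
    and down: "\<And>x. a \<le> x \<Longrightarrow> x \<le> b \<Longrightarrow> f x = 0 \<Longrightarrow> \<exists>D. (f has_real_derivative D) (at x) \<and> D < 0"
    and "a \<le> y" "y \<le> x" "x \<le> b" "f y < 0"
  shows "f x < 0"
proof (rule ccontr)
  assume "\<not> f x < 0"
  have cont_yx: "continuous_on {y..x} f"
    by (rule continuous_on_subset[OF cont]) (use assms in auto)
  define Z where "Z = {z \<in> {y..x}. f z = 0}"
  have "Inf Z \<in> Z"
  proof (rule closed_contains_Inf)
    obtain z where "y \<le> z" "z \<le> x" "f z = 0"
      using IVT'[of f y 0 x] \<open>\<not> f x < 0\<close> assms(4,6) cont_yx by force
    then show "Z \<noteq> {}" by (auto simp: Z_def)
    show "bdd_below Z" by (auto simp: Z_def intro: bdd_belowI[of _ y])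
    show "closed Z" unfolding Z_def by (rule continuous_closed_preimage_constant[OF cont_yx]) simp
  qed
  then have z: "y < Inf Z" "Inf Z \<le> x" "f (Inf Z) = 0"
    using assms(6) by (auto simp: Z_def order_le_less)
  then obtain D where "(f has_real_derivative D) (at (Inf Z))" "D < 0"
    using down[of "Inf Z"] assms(3,5) by auto
  then obtain d where d: "d > 0" "\<And>h. 0 < h \<Longrightarrow> h < d \<Longrightarrow> f (Inf Z) < f (Inf Z - h)"
    using DERIV_neg_dec_left by blast
  obtain h where "0 < h" "h < d" "h < Inf Z - y"
    using field_lbound_gt_zero[of d "Inf Z - y"] d(1) z(1) by auto
  then obtain w where w: "y < w" "w < Inf Z" "f w > 0"
    using d(2)[of h] z(3) by (intro that[of "Inf Z - h"]) auto
  have "continuous_on {y..w} f"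
    by (rule continuous_on_subset[OF cont_yx]) (use w z(2) in auto)
  then obtain z' where "y \<le> z'" "z' \<le> w" "f z' = 0"
    using IVT'[of f y 0 w] assms(6) w by auto
  then have "z' \<in> Z" using w z by (auto simp: Z_def)
  then have "Inf Z \<le> z'" by (auto simp: Z_def intro: cInf_lower bdd_belowI[of _ y])
  then show False using \<open>z' \<le> w\<close> w by simp
qed

lemma pos_before_downcrossing_zero:
  fixes f :: "real \<Rightarrow> real"
  assumes cont: "continuous_on {a..b} f"
    and down: "\<And>x. a \<le> x \<Longrightarrow> x \<le> b \<Longrightarrow> f x = 0 \<Longrightarrow> \<exists>D. (f has_real_derivative D) (at x) \<and> D < 0"
    and "f b = 0" "a \<le> x" "x < b"
  shows "f x > 0"
proof (rule ccontr)
  assume "\<not> f x > 0"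
  obtain y where y: "x \<le> y" "y < b" "f y < 0"
  proof (cases "f x = 0")
    case True
    then obtain D where "(f has_real_derivative D) (at x)" "D < 0"
      using down[of x] assms(4,5) by auto
    then obtain d where d: "d > 0" "\<And>h. 0 < h \<Longrightarrow> h < d \<Longrightarrow> f (x + h) < f x"
      using DERIV_neg_dec_right by blast
    obtain h where "0 < h" "h < d" "h < b - x"
      using field_lbound_gt_zero[of d "b - x"] d(1) \<open>x < b\<close> by auto
    with d(2)[of h] True show ?thesis by (intro that[of "x + h"]) auto
  next
    case False
    with \<open>\<not> f x > 0\<close> \<open>x < b\<close> show ?thesis by (intro that[of x]) auto
  qed
  have "f b < 0"
    by (rule neg_persists_through_downcrossing_zeros[OF cont down, of y]) (use assms(4) y in auto)
  then show False using \<open>f b = 0\<close> by simp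
qed

lemma real_continuous_induction:
  fixes a b x :: real
  assumes "P a"
    and step: "\<And>t. a \<le> t \<Longrightarrow> t < b \<Longrightarrow> P t \<Longrightarrow> \<exists>e>0. \<forall>s. t \<le> s \<and> s \<le> t + e \<longrightarrow> P s"
    and limit: "\<And>s. a < s \<Longrightarrow> s \<le> b \<Longrightarrow> (\<forall>t. a \<le> t \<and> t < s \<longrightarrow> P t) \<Longrightarrow> P s"
    and "a \<le> x" "x \<le> b"
  shows "P x"
proof -
  define B where "B = {y. y \<le> b \<and> (\<forall>s. a \<le> s \<and> s \<le> y \<longrightarrow> P s)}"
  define c where "c = Sup B"
  have "a \<in> B" using assms(1,4,5) by (auto simp: B_def)
  have bdd: "bdd_above B" unfolding B_def by (rule bdd_aboveI[of _ b]) simp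
  have "a \<le> c" unfolding c_def by (rule cSup_upper[OF \<open>a \<in> B\<close> bdd])
  have "c \<le> b" unfolding c_def using \<open>a \<in> B\<close> by (intro cSup_least) (auto simp: B_def)
  have below: "P t" if "a \<le> t" "t < c" for t
  proof -
    obtain y where "y \<in> B" "t < y" using less_cSup_iff[OF _ bdd] \<open>a \<in> B\<close> \<open>t < c\<close> c_def by blast
    then show ?thesis using \<open>a \<le> t\<close> by (simp add: B_def)
  qed
  have "P c"
    using \<open>P a\<close> limit[of c] below \<open>a \<le> c\<close> \<open>c \<le> b\<close> by (cases "c = a") simp_all
  have "c = b"
  proof (rule ccontr)
    assume "c \<noteq> b"
    then obtain e where e: "e > 0" "\<forall>s. c \<le> s \<and> s \<le> c + e \<longrightarrow> P s"
      using step[of c] \<open>a \<le> c\<close> \<open>c \<le> b\<close> \<open>P c\<close> by auto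
    have "P s" if "a \<le> s" "s \<le> min (c + e) b" for s
      using below[of s] e(2) that by (cases "s < c") auto
    then have "min (c + e) b \<in> B" by (simp add: B_def)
    then have "min (c + e) b \<le> c" unfolding c_def by (rule cSup_upper[OF _ bdd])
    then show False using e \<open>c \<le> b\<close> \<open>c \<noteq> b\<close> by simp
  qed
  then show ?thesis using below[of x] \<open>P c\<close> assms(4,5) by (cases "x = b") simp_all
qed

section \<open>Consequences of Raychaudhuri's equations\<close>

locale spherical_region =
  fixes u0 v0 :: real and G U :: "pt set" and \<Omega> r Tuu Tvv :: "pt \<Rightarrow> real"
  assumes G_sub: "G \<subseteq> Krect u0 v0"
    and G_open: "openin (top_of_set (Krect u0 v0)) G"
    and C_out_sub: "C_out v0 \<subseteq> G"
    and past_closed: "\<forall>p\<in>G. J_minus u0 v0 p \<subseteq> G"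
    and G_sub_U: "G \<subseteq> U"
    and \<Omega>_smooth: "C_inf_on U \<Omega>"
    and r_smooth: "C_inf_on U r"
    and \<Omega>_pos: "\<forall>p\<in>G. \<Omega> p > 0"
    and r_nonneg: "\<forall>p\<in>G. r p \<ge> 0"
    and Tuu_nonneg: "\<forall>p\<in>G. Tuu p \<ge> 0"
    and Tvv_nonneg: "\<forall>p\<in>G. Tvv p \<ge> 0"
    and raychaudhuri_u: "\<forall>p\<in>G. pu (\<lambda>q. pu r q / (\<Omega> q)^2) p = - r p * Tuu p / (\<Omega> p)^2"
    and raychaudhuri_v: "\<forall>p\<in>G. pv (\<lambda>q. pv r q / (\<Omega> q)^2) p = - r p * Tvv p / (\<Omega> p)^2"
    and pu_r_C_out: "\<forall>p\<in>C_out v0. pu r p < 0"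
    and pv_r_C_out: "\<forall>p\<in>C_out v0. pv r p > 0"
begin

lemma U_open: "open U"
  using r_smooth by (simp add: C_inf_on_def)

lemma in_U: "p \<in> G \<Longrightarrow> p \<in> U"
  using G_sub_U by auto

lemma G_bounds: "(u, v) \<in> G \<Longrightarrow> 0 \<le> u \<and> u \<le> u0 \<and> v0 \<le> v"
  using G_sub by (auto simp: Krect_def)

lemma G_past:
  "(u, v) \<in> G \<Longrightarrow> 0 \<le> s \<Longrightarrow> s \<le> u \<Longrightarrow> v0 \<le> w \<Longrightarrow> w \<le> v \<Longrightarrow> (s, w) \<in> G"
  using past_closed G_bounds[of u v] by (force simp: J_minus_def Krect_def)

lemma axis_in_G: "v0 \<le> v \<Longrightarrow> (0, v) \<in> G"
  using C_out_sub by (auto simp: C_out_def)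

lemma pv_r_axis_pos: "v0 \<le> v \<Longrightarrow> pv r (0, v) > 0"
  using pv_r_C_out by (auto simp: C_out_def)

lemma G_nbhd: "p \<in> G \<Longrightarrow> \<exists>e>0. \<forall>q\<in>Krect u0 v0. dist q p < e \<longrightarrow> q \<in> G"
  using G_open unfolding openin_euclidean_subtopology_iff by blast

lemma G_extends_in_v:
  assumes "(u, v) \<in> G"
  shows "\<exists>e>0. \<forall>w. v \<le> w \<and> w \<le> v + e \<longrightarrow> (u, w) \<in> G"
proof -
  obtain e where e: "e > 0" "\<forall>q\<in>Krect u0 v0. dist q (u, v) < e \<longrightarrow> q \<in> G"
    using G_nbhd[OF assms] by blast
  have "(u, w) \<in> G" if "v \<le> w" "w \<le> v + e / 2" for w
    using e(2)[rule_format, of "(u, w)"] G_bounds[OF assms] that e(1)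
    by (auto simp: Krect_def dist_Pair_Pair dist_real_def)
  then show ?thesis using e(1) by (intro exI[of _ "e / 2"]) auto
qed

lemma G_extends_in_u:
  assumes "(u, v) \<in> G" "u < u0"
  shows "\<exists>e>0. \<forall>s. u \<le> s \<and> s \<le> u + e \<longrightarrow> (s, v) \<in> G"
proof -
  obtain e where e: "e > 0" "\<forall>q\<in>Krect u0 v0. dist q (u, v) < e \<longrightarrow> q \<in> G"
    using G_nbhd[OF assms(1)] by blast
  obtain e' where e': "e' > 0" "e' < e" "e' < u0 - u"
    using field_lbound_gt_zero[of e "u0 - u"] e(1) assms(2) by auto
  have "(s, v) \<in> G" if "u \<le> s" "s \<le> u + e'" for s
    using e(2)[rule_format, of "(s, v)"] G_bounds[OF assms(1)] that e'
    by (auto simp: Krect_def dist_Pair_Pair dist_real_def)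
  then show ?thesis using e'(1) by blast
qed

lemma \<Omega>_sq_pos: "p \<in> G \<Longrightarrow> (\<Omega> p)^2 > 0"
  using \<Omega>_pos by auto

lemma pu_r_over_\<Omega>_sq_antimono:
  assumes "(u, v) \<in> G" "0 \<le> s" "s \<le> u"
  shows "pu r (u, v) / (\<Omega> (u, v))^2 \<le> pu r (s, v) / (\<Omega> (s, v))^2"
proof (rule deriv_nonpos_imp_antimono[OF assms(3), of "\<lambda>x. pu r (x, v) / (\<Omega> (x, v))^2"])
  fix x assume "s \<le> x" "x \<le> u"
  then have xG: "(x, v) \<in> G" using G_past[OF assms(1)] G_bounds[OF assms(1)] assms(2) by auto
  have "(\<lambda>x. pu r (x, v) / (\<Omega> (x, v))^2) differentiable (at x)"
    using differentiable_divide_square[OF C_inf_on_has_deriv_u[OF C_inf_on_pu[OF r_smooth]]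
        C_inf_on_has_deriv_u[OF \<Omega>_smooth]] in_U[OF xG] \<Omega>_pos xG by force
  moreover have "deriv (\<lambda>x. pu r (x, v) / (\<Omega> (x, v))^2) x = - r (x, v) * Tuu (x, v) / (\<Omega> (x, v))^2"
    using raychaudhuri_u xG unfolding pu_def by auto
  moreover have "- r (x, v) * Tuu (x, v) / (\<Omega> (x, v))^2 \<le> 0"
    using r_nonneg Tuu_nonneg xG by (auto intro!: divide_nonpos_nonneg)
  ultimately show "(\<lambda>x. pu r (x, v) / (\<Omega> (x, v))^2) differentiable (at x) \<and>
      deriv (\<lambda>x. pu r (x, v) / (\<Omega> (x, v))^2) x \<le> 0" by simp
qed

lemma pv_r_over_\<Omega>_sq_antimono:
  assumes "(u, w) \<in> G" "v0 \<le> v" "v \<le> w"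
  shows "pv r (u, w) / (\<Omega> (u, w))^2 \<le> pv r (u, v) / (\<Omega> (u, v))^2"
proof (rule deriv_nonpos_imp_antimono[OF assms(3), of "\<lambda>t. pv r (u, t) / (\<Omega> (u, t))^2"])
  fix t assume "v \<le> t" "t \<le> w"
  then have tG: "(u, t) \<in> G" using G_past[OF assms(1)] G_bounds[OF assms(1)] assms(2) by auto
  have "(\<lambda>t. pv r (u, t) / (\<Omega> (u, t))^2) differentiable (at t)"
    using differentiable_divide_square[OF C_inf_on_has_deriv_v[OF C_inf_on_pv[OF r_smooth]]
        C_inf_on_has_deriv_v[OF \<Omega>_smooth]] in_U[OF tG] \<Omega>_pos tG by force
  moreover have "deriv (\<lambda>t. pv r (u, t) / (\<Omega> (u, t))^2) t = - r (u, t) * Tvv (u, t) / (\<Omega> (u, t))^2"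
    using raychaudhuri_v tG unfolding pv_def by auto
  moreover have "- r (u, t) * Tvv (u, t) / (\<Omega> (u, t))^2 \<le> 0"
    using r_nonneg Tvv_nonneg tG by (auto intro!: divide_nonpos_nonneg)
  ultimately show "(\<lambda>t. pv r (u, t) / (\<Omega> (u, t))^2) differentiable (at t) \<and>
      deriv (\<lambda>t. pv r (u, t) / (\<Omega> (u, t))^2) t \<le> 0" by simp
qed

lemma pu_r_neg: "p \<in> G \<Longrightarrow> pu r p < 0"
proof -
  assume pG: "p \<in> G"
  obtain u v where p: "p = (u, v)" by force
  have "v0 \<le> v" "0 \<le> u" using G_bounds pG p by auto
  then have "pu r (0, v) / (\<Omega> (0, v))^2 < 0"
    using pu_r_C_out \<Omega>_sq_pos[OF axis_in_G] by (auto simp: C_out_def divide_less_0_iff)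
  then have "pu r (u, v) / (\<Omega> (u, v))^2 < 0"
    using pu_r_over_\<Omega>_sq_antimono[of u v 0] pG p \<open>0 \<le> u\<close> by simp
  then show ?thesis using \<Omega>_sq_pos pG p by (simp add: divide_less_0_iff)
qed

lemma pv_r_nonpos_after:
  assumes "(u, w) \<in> G" "v0 \<le> v" "v \<le> w" "pv r (u, v) \<le> 0"
  shows "pv r (u, w) \<le> 0"
proof -
  have "(u, v) \<in> G" using G_past[OF assms(1)] G_bounds[OF assms(1)] assms(2,3) by auto
  then have "pv r (u, v) / (\<Omega> (u, v))^2 \<le> 0"
    using assms(4) \<Omega>_sq_pos by (simp add: divide_le_0_iff)
  then have "pv r (u, w) / (\<Omega> (u, w))^2 \<le> 0"
    using pv_r_over_\<Omega>_sq_antimono[OF assms(1-3)] by linarith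
  then show ?thesis using \<Omega>_sq_pos[OF assms(1)] by (simp add: divide_le_0_iff)
qed

lemma pv_r_nonneg_before:
  assumes "(u, w) \<in> G" "v0 \<le> v" "v \<le> w" "pv r (u, w) \<ge> 0"
  shows "pv r (u, v) \<ge> 0"
proof -
  have "(u, v) \<in> G" using G_past[OF assms(1)] G_bounds[OF assms(1)] assms(2,3) by auto
  have "pv r (u, w) / (\<Omega> (u, w))^2 \<ge> 0"
    using assms(4) \<Omega>_sq_pos[OF assms(1)] by simp
  then have "pv r (u, v) / (\<Omega> (u, v))^2 \<ge> 0"
    using pv_r_over_\<Omega>_sq_antimono[OF assms(1-3)] by linarith
  then show ?thesis using \<Omega>_sq_pos[OF \<open>(u, v) \<in> G\<close>] by (simp add: zero_le_divide_iff)
qed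

lemma r_antimono_u:
  assumes "(u, v) \<in> G" "0 \<le> s" "s \<le> u"
  shows "r (u, v) \<le> r (s, v)"
proof (rule DERIV_nonpos_imp_nonincreasing[OF assms(3)])
  fix x assume "s \<le> x" "x \<le> u"
  then have xG: "(x, v) \<in> G" using G_past[OF assms(1)] G_bounds[OF assms(1)] assms(2) by auto
  show "\<exists>y. ((\<lambda>x. r (x, v)) has_real_derivative y) (at x) \<and> y \<le> 0"
    using C_inf_on_has_deriv_u[OF r_smooth in_U[OF xG]] pu_r_neg[OF xG] by force
qed

lemma r_mono_v:
  assumes "(u, w) \<in> G" "v0 \<le> v" "v \<le> w" "pv r (u, w) \<ge> 0"
  shows "r (u, v) \<le> r (u, w)"
proof (rule DERIV_nonneg_imp_nondecreasing[OF assms(3)])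
  fix t assume "v \<le> t" "t \<le> w"
  then have tG: "(u, t) \<in> G" using G_past[OF assms(1)] G_bounds[OF assms(1)] assms(2) by auto
  have "pv r (u, t) \<ge> 0"
    using pv_r_nonneg_before[OF assms(1) _ \<open>t \<le> w\<close> assms(4)] \<open>v \<le> t\<close> assms(2) by simp
  then show "\<exists>y. ((\<lambda>t. r (u, t)) has_real_derivative y) (at t) \<and> 0 \<le> y"
    using C_inf_on_has_deriv_v[OF r_smooth in_U[OF tG]] by force
qed

lemma pu_hawking_mass_where_pv_r_zero:
  assumes "(u, v) \<in> G" "pv r (u, v) = 0"
  shows "pu (hawking_mass \<Omega> r) (u, v)
           = pu r (u, v) * (1/2 + 2 * r (u, v) * pu (pv r) (u, v) / (\<Omega> (u, v))^2)"
proof -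
  have uU: "(u, v) \<in> U" using in_U[OF assms(1)] .
  note dr = C_inf_on_has_deriv_u[OF r_smooth uU]
    and dpur = C_inf_on_has_deriv_u[OF C_inf_on_pu[OF r_smooth] uU]
    and dpvr = C_inf_on_has_deriv_u[OF C_inf_on_pv[OF r_smooth] uU]
    and d\<Omega> = C_inf_on_has_deriv_u[OF \<Omega>_smooth uU]
  obtain E where dE: "((\<lambda>s. 4 / (\<Omega> (s, v))^2) has_real_derivative E) (at u)"
    using DERIV_divide[OF DERIV_const[of 4] DERIV_power[OF d\<Omega>, of 2]] \<Omega>_pos assms(1) by fastforce
  have "((\<lambda>s. hawking_mass \<Omega> r (s, v)) has_real_derivative
      pu r (u, v) / 2 + r (u, v) / 2 * (4 / (\<Omega> (u, v))^2 * pu r (u, v) * pu (pv r) (u, v))) (at u)"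
    unfolding hawking_mass_def
    using DERIV_mult[OF DERIV_cdivide[OF dr, of 2]
        DERIV_add[OF DERIV_const[of 1] DERIV_mult[OF DERIV_mult[OF dE dpur] dpvr]]] assms(2)
    by (simp add: algebra_simps)
  then have "pu (hawking_mass \<Omega> r) (u, v)
      = pu r (u, v) / 2 + r (u, v) / 2 * (4 / (\<Omega> (u, v))^2 * pu r (u, v) * pu (pv r) (u, v))"
    unfolding pu_def by (simp add: DERIV_imp_deriv)
  then show ?thesis by (simp add: field_simps)
qed

lemma pv_r_has_deriv_u:
  "(u, v) \<in> U \<Longrightarrow> ((\<lambda>s. pv r (s, v)) has_real_derivative pu (pv r) (u, v)) (at u)"
  using C_inf_on_has_deriv_u[OF C_inf_on_pv[OF r_smooth]] .

lemma pv_r_isCont_u: "(u, v) \<in> U \<Longrightarrow> isCont (\<lambda>s. pv r (s, v)) u"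
  using pv_r_has_deriv_u by (rule DERIV_isCont)

lemma pv_r_isCont_v: "(u, v) \<in> U \<Longrightarrow> isCont (\<lambda>t. pv r (u, t)) v"
  using C_inf_on_has_deriv_v[OF C_inf_on_pv[OF r_smooth]] by (rule DERIV_isCont)

lemma pv_r_nonneg_at_left_limit:
  assumes "(s, b) \<in> U" "a < b" "\<forall>t. a < t \<and> t < b \<longrightarrow> pv r (s, t) > 0"
  shows "pv r (s, b) \<ge> 0"
proof (rule tendsto_lowerbound[OF _ _ trivial_limit_at_left_real])
  show "((\<lambda>t. pv r (s, t)) \<longlongrightarrow> pv r (s, b)) (at_left b)"
    using pv_r_isCont_v[OF assms(1)] unfolding isCont_def by (rule tendsto_mono[OF at_le, rotated]) simp
  show "\<forall>\<^sub>F t in at_left b. 0 \<le> pv r (s, t)"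
    using eventually_at_left_real[OF assms(2)] by eventually_elim (use assms(3) in force)
qed

end

section \<open>The apparent horizon inside W\<close>

locale apparent_horizon_region = spherical_region +
  fixes Tuv :: "pt \<Rightarrow> real" and \<rho> \<delta> :: real
  assumes Tuv_nonneg: "\<forall>p\<in>G. Tuv p \<ge> 0"
    and hawking_mass_u: "\<forall>p\<in>G. pu (hawking_mass \<Omega> r) p
                   = 2 * (r p)^2 / (\<Omega> p)^2 * (Tuv p * pu r p - Tuu p * pv r p)"
    and condition_A: "\<forall>p\<in>regA G r \<inter> W_set G r \<rho> \<delta>. Tuv p / (\<Omega> p)^2 < 1 / (4 * (r p)^2)"
    and VII: "\<forall>p q. p \<in> closure (regR G r) \<inter> Krect u0 v0 \<longrightarrow>
                   q \<in> closure (regR G r) \<inter> Krect u0 v0 \<inter> I_minus u0 v0 p \<longrightarrow>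
                   (J_minus u0 v0 p \<inter> J_plus u0 v0 q) - {p} \<subseteq> regR G r \<union> regA G r \<longrightarrow>
                   p \<in> regR G r \<union> regA G r"
begin

definition AW :: "pt set" where
  "AW = regA G r \<inter> W_set G r \<rho> \<delta>"

lemma mem_AW_iff: "p \<in> AW \<longleftrightarrow> p \<in> G \<and> pv r p = 0 \<and> \<rho> - \<delta> \<le> r p"
  unfolding AW_def regA_def W_set_def using pu_r_neg[of p] by auto

lemma pu_pv_r_neg_on_AW:
  assumes "(u, v) \<in> AW"
  shows "pu (pv r) (u, v) < 0"
proof -
  let ?R = "r (u, v)" and ?D = "pu (pv r) (u, v)" and ?\<Omega>2 = "(\<Omega> (u, v))^2"
  have uvG: "(u, v) \<in> G" and pv0: "pv r (u, v) = 0" using assms mem_AW_iff by auto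
  have "pu r (u, v) * (1/2 + 2 * ?R * ?D / ?\<Omega>2) = pu r (u, v) * (2 * ?R^2 * Tuv (u, v) / ?\<Omega>2)"
    using pu_hawking_mass_where_pv_r_zero[OF uvG pv0] hawking_mass_u uvG pv0 by (simp add: ac_simps)
  then have balance: "1/2 + 2 * ?R * ?D / ?\<Omega>2 = 2 * ?R^2 * Tuv (u, v) / ?\<Omega>2"
    using pu_r_neg[OF uvG] by (metis less_irrefl mult_left_cancel)
  then have "?R \<noteq> 0" by auto
  then have R_pos: "?R > 0" using r_nonneg uvG by force
  have "Tuv (u, v) / ?\<Omega>2 < 1 / (4 * ?R^2)"
    using condition_A assms unfolding AW_def by auto
  then have "2 * ?R^2 * (Tuv (u, v) / ?\<Omega>2) < 2 * ?R^2 * (1 / (4 * ?R^2))"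
    using R_pos by (intro mult_strict_left_mono) auto
  also have "\<dots> = 1/2" using R_pos by (simp add: field_simps)
  finally have "2 * ?R * ?D / ?\<Omega>2 < 0" using balance by simp
  then have "?R * ?D < 0" using \<Omega>_sq_pos[OF uvG] by (simp add: divide_less_0_iff)
  then show ?thesis using R_pos by (simp add: mult_less_0_iff)
qed

lemma pv_r_pos_left_of_AW:
  assumes "(u, v) \<in> AW" "0 \<le> s" "s < u"
  shows "pv r (s, v) > 0"
proof (rule pos_before_downcrossing_zero[of 0 u "\<lambda>s. pv r (s, v)"])
  have uG: "(u, v) \<in> G" using assms(1) mem_AW_iff by auto
  then have segG: "(x, v) \<in> G" if "0 \<le> x" "x \<le> u" for x
    using G_past[OF uG] G_bounds[OF uG] that by auto
  show "continuous_on {0..u} (\<lambda>s. pv r (s, v))"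
    by (intro continuous_at_imp_continuous_on ballI pv_r_isCont_u in_U segG) auto
  show "\<exists>D. ((\<lambda>s. pv r (s, v)) has_real_derivative D) (at x) \<and> D < 0"
    if "0 \<le> x" "x \<le> u" "pv r (x, v) = 0" for x
  proof -
    have "r (u, v) \<le> r (x, v)" using r_antimono_u[OF uG] that by auto
    then have "(x, v) \<in> AW" using mem_AW_iff assms(1) segG that by force
    then show ?thesis
      using pv_r_has_deriv_u[OF in_U[OF segG[OF that(1,2)]]] pu_pv_r_neg_on_AW by blast
  qed
  show "pv r (u, v) = 0" using assms(1) mem_AW_iff by auto
qed (use assms in auto)

lemma AW_unique_on_line:
  assumes "(u, v) \<in> AW" "(u', v) \<in> AW"
  shows "u = u'"
proof -
  have "0 \<le> u" "0 \<le> u'" "pv r (u, v) = 0" "pv r (u', v) = 0"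
    using assms mem_AW_iff G_bounds by auto
  then show ?thesis using pv_r_pos_left_of_AW[OF assms(1), of u'] pv_r_pos_left_of_AW[OF assms(2), of u]
    by (cases u u' rule: linorder_cases) auto
qed

text \<open>Since \<open>\<partial>\<^sub>v r / \<Omega>\<^sup>2\<close> is nonincreasing in \<open>v\<close>, \<open>\<partial>\<^sub>v r \<le> 0\<close> at \<open>(u, w)\<close>, so the
  intermediate value theorem gives a zero \<open>z \<in> [a, u]\<close>. It lies in \<open>W\<close> because
  \<open>r (u, v) \<le> r (z, v) \<le> r (z, w)\<close>: \<open>r\<close> decreases in \<open>u\<close>, and along \<open>u = z\<close> it increases in
  \<open>v\<close> up to the zero at \<open>w\<close>.\<close>
lemma AW_persists:
  assumes "(u, v) \<in> AW" "v \<le> w" "(u, w) \<in> G" "0 \<le> a" "a \<le> u" "pv r (a, w) \<ge> 0"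
  shows "\<exists>z. a \<le> z \<and> z \<le> u \<and> (z, w) \<in> AW"
proof -
  have uG: "(u, v) \<in> G" using assms(1) mem_AW_iff by auto
  have v0v: "v0 \<le> v" using G_bounds uG by auto
  have segG: "(x, w) \<in> G" if "a \<le> x" "x \<le> u" for x
    using G_past[OF assms(3)] G_bounds[OF assms(3)] assms(4) that by auto
  have "pv r (u, w) \<le> 0"
    using pv_r_nonpos_after[OF assms(3) v0v assms(2)] assms(1) mem_AW_iff by auto
  moreover have "continuous_on {a..u} (\<lambda>s. pv r (s, w))"
    by (intro continuous_at_imp_continuous_on ballI pv_r_isCont_u in_U segG) auto
  ultimately obtain z where z: "a \<le> z" "z \<le> u" "pv r (z, w) = 0"
    using IVT2'[of "\<lambda>s. pv r (s, w)" u 0 a] assms(5,6) by auto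
  have zG: "(z, w) \<in> G" using segG z by auto
  have "r (u, v) \<le> r (z, v)" using r_antimono_u[OF uG] z assms(4) by auto
  also have "\<dots> \<le> r (z, w)" using r_mono_v[OF zG v0v assms(2)] z by simp
  finally have "(z, w) \<in> AW" using assms(1) mem_AW_iff zG z by auto
  then show ?thesis using z by auto
qed

definition AW_vs :: "real set" where
  "AW_vs = snd ` AW"

text \<open>For \<open>t \<notin> AW_vs\<close> the description has no witness and \<open>AW_u t\<close> is unspecified.\<close>
definition AW_u :: "real \<Rightarrow> real" where
  "AW_u t = (THE u. (u, t) \<in> AW)"

lemma AW_u_eq: "(u, t) \<in> AW \<Longrightarrow> AW_u t = u"
  unfolding AW_u_def by (rule the_equality) (auto intro: AW_unique_on_line)

lemma AW_vsI: "(u, t) \<in> AW \<Longrightarrow> t \<in> AW_vs"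
  unfolding AW_vs_def by force

lemma AW_u_mem: "t \<in> AW_vs \<Longrightarrow> (AW_u t, t) \<in> AW"
  unfolding AW_vs_def by (auto simp: AW_u_eq)

lemma AW_u_in_G: "t \<in> AW_vs \<Longrightarrow> (AW_u t, t) \<in> G"
  using AW_u_mem mem_AW_iff by auto

lemma AW_vs_bounds: "t \<in> AW_vs \<Longrightarrow> v0 \<le> t \<and> 0 \<le> AW_u t \<and> AW_u t \<le> u0"
  using AW_u_in_G G_bounds by blast

lemma AW_graph: "AW = (\<lambda>t. (AW_u t, t)) ` AW_vs"
proof
  show "AW \<subseteq> (\<lambda>t. (AW_u t, t)) ` AW_vs"
  proof
    fix p assume "p \<in> AW"
    moreover obtain u t where "p = (u, t)" by (cases p)
    ultimately show "p \<in> (\<lambda>t. (AW_u t, t)) ` AW_vs"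
      using AW_u_eq AW_vsI by (intro image_eqI[of _ _ t]) auto
  qed
qed (auto intro: AW_u_mem)

lemma AW_u_antimono:
  assumes "t \<in> AW_vs" "t' \<in> AW_vs" "t \<le> t'"
  shows "AW_u t' \<le> AW_u t"
proof (rule ccontr)
  assume less: "\<not> AW_u t' \<le> AW_u t"
  have "(AW_u t, t') \<in> G"
    using G_past[OF AW_u_in_G[OF assms(2)], of "AW_u t" t'] AW_vs_bounds[OF assms(1)]
      AW_vs_bounds[OF assms(2)] less by auto
  then obtain z where "z \<le> AW_u t" "(z, t') \<in> AW"
    using AW_persists[OF AW_u_mem[OF assms(1)] assms(3) _ order_refl]
      pv_r_axis_pos[of t'] AW_vs_bounds[OF assms(1)] AW_vs_bounds[OF assms(2)] by auto
  then show False using AW_u_eq less by auto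
qed

lemma regR_left_of_AW:
  assumes "t \<in> AW_vs" "0 \<le> s" "s < AW_u t"
  shows "(s, t) \<in> regR G r"
proof -
  have "(s, t) \<in> G"
    using G_past[OF AW_u_in_G[OF assms(1)], of s t] AW_vs_bounds[OF assms(1)] assms(2,3) by auto
  then show ?thesis
    using pv_r_pos_left_of_AW[OF AW_u_mem[OF assms(1)] assms(2,3)] pu_r_neg by (simp add: regR_def)
qed

lemma AW_vs_extends:
  assumes "t \<in> AW_vs"
  shows "\<exists>e>0. \<forall>t'. t \<le> t' \<and> t' \<le> t + e \<longrightarrow> t' \<in> AW_vs"
proof -
  obtain e where e: "e > 0" "\<forall>w. t \<le> w \<and> w \<le> t + e \<longrightarrow> (AW_u t, w) \<in> G"
    using G_extends_in_v[OF AW_u_in_G[OF assms]] by blast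
  have "t' \<in> AW_vs" if "t \<le> t'" "t' \<le> t + e" for t'
  proof -
    have "(AW_u t, t') \<in> G" "0 \<le> pv r (0, t')"
      using e(2) that pv_r_axis_pos[of t'] AW_vs_bounds[OF assms] by auto
    then obtain z where "(z, t') \<in> AW"
      using AW_persists[OF AW_u_mem[OF assms] \<open>t \<le> t'\<close> _ order_refl]
        AW_vs_bounds[OF assms] by auto
    then show ?thesis by (rule AW_vsI)
  qed
  then show ?thesis using e(1) by blast
qed

lemma diamond_below_AW_in_R_or_A:
  assumes "t0 < vb"
    and below: "\<forall>t. t0 \<le> t \<and> t < vb \<longrightarrow> t \<in> AW_vs \<and> ub \<le> AW_u t"
    and "0 < s1" "s1 \<le> ub"
    and segment: "\<forall>s. 0 \<le> s \<and> s < s1 \<longrightarrow> (s, vb) \<in> G"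
  shows "J_minus u0 v0 (s1, vb) \<inter> J_plus u0 v0 (s1 / 2, t0) - {(s1, vb)} \<subseteq> regR G r \<union> regA G r"
proof
  fix y assume y: "y \<in> J_minus u0 v0 (s1, vb) \<inter> J_plus u0 v0 (s1 / 2, t0) - {(s1, vb)}"
  obtain a b where ab: "y = (a, b)" by force
  have a: "s1 / 2 \<le> a" "a \<le> s1" "t0 \<le> b" "b \<le> vb" "(a, b) \<noteq> (s1, vb)"
    using y ab by (auto simp: J_minus_def J_plus_def)
  have "(a, b) \<in> regR G r \<union> regA G r"
  proof (cases "b < vb")
    case True
    then have b: "b \<in> AW_vs" "ub \<le> AW_u b" using below a by auto
    show ?thesis
    proof (cases "a < AW_u b")
      case True
      then show ?thesis using regR_left_of_AW[OF b(1)] a \<open>0 < s1\<close> by auto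
    next
      case False
      then have "a = AW_u b" using b a \<open>s1 \<le> ub\<close> by auto
      then show ?thesis using AW_u_mem[OF b(1)] by (simp add: AW_def)
    qed
  next
    case False
    then have b: "b = vb" "a < s1" using a by auto
    then have aG: "(a, vb) \<in> G" using segment a \<open>0 < s1\<close> by auto
    have "pv r (a, t) > 0" if "t0 < t" "t < vb" for t
    proof -
      have "t \<in> AW_vs" "ub \<le> AW_u t" using below that by auto
      then show ?thesis
        using pv_r_pos_left_of_AW[OF AW_u_mem, of t a] a b \<open>0 < s1\<close> \<open>s1 \<le> ub\<close> by auto
    qed
    then have "pv r (a, vb) \<ge> 0"
      using pv_r_nonneg_at_left_limit[OF in_U[OF aG] assms(1)] by blast
    then show ?thesis using aG pu_r_neg[OF aG] b by (auto simp: regR_def regA_def)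
  qed
  then show "y \<in> regR G r \<union> regA G r" using ab by simp
qed

lemma segment_end_in_R_or_A:
  assumes "t0 < vb"
    and below: "\<forall>t. t0 \<le> t \<and> t < vb \<longrightarrow> t \<in> AW_vs \<and> ub \<le> AW_u t"
    and "0 < s1" "s1 \<le> ub"
    and segment: "\<forall>s. 0 \<le> s \<and> s < s1 \<longrightarrow> (s, vb) \<in> G"
  shows "(s1, vb) \<in> regR G r \<union> regA G r"
proof -
  have t0: "t0 \<in> AW_vs" "ub \<le> AW_u t0" using below assms(1) by auto
  then have "ub \<le> u0" "v0 \<le> t0" using AW_vs_bounds by force+
  have "(s1 / 2, t0) \<in> regR G r"
    using regR_left_of_AW t0 assms(3,4) by auto
  moreover have "(s1, vb) \<in> closure (regR G r)"
  proof (rule Lim_in_closed_set[of _ "\<lambda>h. (s1 - h, vb - h)" "at_right 0"])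
    have "0 < min s1 (vb - t0)" using assms(1,3) by simp
    from eventually_at_right_real[OF this]
    show "\<forall>\<^sub>F h in at_right 0. (s1 - h, vb - h) \<in> closure (regR G r)"
    proof eventually_elim
      case (elim h)
      then have "vb - h \<in> AW_vs" "ub \<le> AW_u (vb - h)" using below by auto
      then have "(s1 - h, vb - h) \<in> regR G r"
        using regR_left_of_AW elim assms(4) by auto
      then show ?case using closure_subset by blast
    qed
    show "((\<lambda>h. (s1 - h, vb - h)) \<longlongrightarrow> (s1, vb)) (at_right 0)"
      by (auto intro!: tendsto_eq_intros)
  qed simp_all
  moreover have "(s1, vb) \<in> Krect u0 v0" "(s1 / 2, t0) \<in> Krect u0 v0"
    using \<open>ub \<le> u0\<close> \<open>v0 \<le> t0\<close> assms(1,3,4) by (auto simp: Krect_def)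
  moreover have "(s1 / 2, t0) \<in> I_minus u0 v0 (s1, vb)"
    using calculation(4) assms(1,3) by (auto simp: I_minus_def)
  ultimately show ?thesis
    using VII diamond_below_AW_in_R_or_A[OF assms] closure_subset by blast
qed

lemma segment_below_AW_in_G:
  assumes "t0 < vb"
    and below: "\<forall>t. t0 \<le> t \<and> t < vb \<longrightarrow> t \<in> AW_vs \<and> ub \<le> AW_u t"
    and "0 \<le> s" "s \<le> ub"
  shows "(s, vb) \<in> G"
proof (rule real_continuous_induction[of "\<lambda>s. (s, vb) \<in> G" 0 ub s])
  have t0: "t0 \<in> AW_vs" "ub \<le> AW_u t0" using below assms(1) by auto
  then have "ub \<le> u0" "v0 \<le> t0" using AW_vs_bounds by force+
  show "(0, vb) \<in> G" using axis_in_G \<open>v0 \<le> t0\<close> assms(1) by simp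
  show "\<exists>e>0. \<forall>s'. t \<le> s' \<and> s' \<le> t + e \<longrightarrow> (s', vb) \<in> G"
    if "0 \<le> t" "t < ub" "(t, vb) \<in> G" for t
    using G_extends_in_u[OF that(3)] that(2) \<open>ub \<le> u0\<close> by simp
  show "(s', vb) \<in> G" if "0 < s'" "s' \<le> ub" "\<forall>t. 0 \<le> t \<and> t < s' \<longrightarrow> (t, vb) \<in> G" for s'
    using segment_end_in_R_or_A[OF assms(1) below that] by (auto simp: regR_def regA_def)
qed (use assms in auto)

lemma AW_closed_at_left_limit:
  assumes "(ub, vb) \<in> G" "v < vb" "\<forall>t. v \<le> t \<and> t < vb \<longrightarrow> t \<in> AW_vs"
    and lim: "(AW_u \<longlongrightarrow> ub) (at_left vb)"
  shows "(ub, vb) \<in> AW"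
proof -
  have curve: "((\<lambda>t. (AW_u t, t)) \<longlongrightarrow> (ub, vb)) (at_left vb)"
    by (intro tendsto_Pair lim tendsto_ident_at)
  have ev: "\<forall>\<^sub>F t in at_left vb. (AW_u t, t) \<in> AW"
    using eventually_at_left_real[OF assms(2)] by eventually_elim (use assms(3) AW_u_mem in auto)
  have pv_lim: "((\<lambda>t. pv r (AW_u t, t)) \<longlongrightarrow> pv r (ub, vb)) (at_left vb)"
    using isCont_tendsto_compose[OF C_inf_on_isCont[OF C_inf_on_pv[OF r_smooth] in_U[OF assms(1)]] curve] .
  have r_lim: "((\<lambda>t. r (AW_u t, t)) \<longlongrightarrow> r (ub, vb)) (at_left vb)"
    using isCont_tendsto_compose[OF C_inf_on_isCont[OF r_smooth in_U[OF assms(1)]] curve] .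
  have "pv r (ub, vb) \<le> 0"
    by (rule tendsto_upperbound[OF pv_lim _ trivial_limit_at_left_real])
       (use ev in eventually_elim, use mem_AW_iff in auto)
  moreover have "pv r (ub, vb) \<ge> 0"
    by (rule tendsto_lowerbound[OF pv_lim _ trivial_limit_at_left_real])
       (use ev in eventually_elim, use mem_AW_iff in auto)
  moreover have "r (ub, vb) \<ge> \<rho> - \<delta>"
    by (rule tendsto_lowerbound[OF r_lim _ trivial_limit_at_left_real])
       (use ev in eventually_elim, use mem_AW_iff in auto)
  ultimately show ?thesis using mem_AW_iff assms(1) by auto
qed

lemma AW_vs_left_closed:
  assumes "v < vb" and below: "\<forall>t. v \<le> t \<and> t < vb \<longrightarrow> t \<in> AW_vs"
  shows "vb \<in> AW_vs"
proof -
  define ub where "ub = Inf (AW_u ` {v..<vb})"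
  have bdd: "bdd_below (AW_u ` {v..<vb})"
    using below AW_vs_bounds by (intro bdd_belowI[of _ 0]) auto
  have ub_le: "ub \<le> AW_u t" if "v \<le> t" "t < vb" for t
    unfolding ub_def using that by (intro cInf_lower[OF _ bdd]) auto
  have "0 \<le> ub"
    unfolding ub_def using assms below AW_vs_bounds by (intro cInf_greatest) auto
  have lim: "(AW_u \<longlongrightarrow> ub) (at_left vb)"
  proof (rule tendstoI)
    fix e :: real assume "e > 0"
    then obtain t1 where t1: "v \<le> t1" "t1 < vb" "AW_u t1 < ub + e"
      using cInf_less_iff[OF _ bdd, of "ub + e"] assms(1) unfolding ub_def by fastforce
    from eventually_at_left_real[OF t1(2)]
    show "\<forall>\<^sub>F t in at_left vb. dist (AW_u t) ub < e"
    proof eventually_elim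
      case (elim t)
      then have "AW_u t \<le> AW_u t1" "ub \<le> AW_u t"
        using AW_u_antimono[of t1 t] below t1 ub_le[of t] by auto
      then show ?case using t1(3) by (simp add: dist_real_def)
    qed
  qed
  have "(ub, vb) \<in> G"
    using segment_below_AW_in_G[OF assms(1) _ \<open>0 \<le> ub\<close> order_refl] below ub_le by blast
  then have "(ub, vb) \<in> AW" using AW_closed_at_left_limit assms lim by blast
  then show ?thesis by (rule AW_vsI)
qed

lemma AW_vs_upward_closed:
  assumes "v \<in> AW_vs" "v \<le> w"
  shows "w \<in> AW_vs"
  using real_continuous_induction[of "\<lambda>t. t \<in> AW_vs" v w w] assms AW_vs_extends AW_vs_left_closed
  by blast

lemma AW_u_eventually_gt:
  assumes "t \<in> AW_vs" "a < AW_u t"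
  shows "\<forall>\<^sub>F t' in at t within AW_vs. a < AW_u t'"
proof (cases "a < 0")
  case True
  then show ?thesis
    unfolding eventually_at_filter using AW_vs_bounds by (intro always_eventually) force
next
  case False
  define a' where "a' = (a + AW_u t) / 2"
  have a': "0 \<le> a'" "a < a'" "a' < AW_u t" using False assms(2) by (auto simp: a'_def)
  have "(a', t) \<in> G"
    using G_past[OF AW_u_in_G[OF assms(1)], of a' t] a' AW_vs_bounds[OF assms(1)] by auto
  have "pv r (a', t) > 0" using pv_r_pos_left_of_AW[OF AW_u_mem[OF assms(1)]] a' by auto
  then have ev_pos: "\<forall>\<^sub>F t' in at t. pv r (a', t') > 0"
    using order_tendstoD(1)[OF pv_r_isCont_v[OF in_U[OF \<open>(a', t) \<in> G\<close>], unfolded isCont_def]] by simp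
  obtain e where e: "e > 0" "\<forall>w. t \<le> w \<and> w \<le> t + e \<longrightarrow> (AW_u t, w) \<in> G"
    using G_extends_in_v[OF AW_u_in_G[OF assms(1)]] by blast
  have ev_near: "\<forall>\<^sub>F t' in at t. t' < t + e"
    using order_tendstoD(2)[OF tendsto_ident_at, of t "t + e"] e(1) by simp
  from ev_pos ev_near have "\<forall>\<^sub>F t' in at t. t' \<in> AW_vs \<longrightarrow> a < AW_u t'"
  proof eventually_elim
    case (elim t')
    show ?case
    proof (cases "t' \<le> t")
      case True
      then show ?thesis using AW_u_antimono assms by fastforce
    next
      case False
      then obtain z where "a' \<le> z" "(z, t') \<in> AW"
        using AW_persists[OF AW_u_mem[OF assms(1)] _ _ a'(1) less_imp_le[OF a'(3)]
            less_imp_le[OF elim(1)]] e(2) elim(2) by force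
      then show ?thesis using AW_u_eq a'(2) by auto
    qed
  qed
  then show ?thesis unfolding eventually_at_filter by eventually_elim auto
qed

lemma AW_u_eventually_lt:
  assumes "t \<in> AW_vs" "AW_u t < b"
  shows "\<forall>\<^sub>F t' in at t within AW_vs. AW_u t' < b"
proof -
  define u where "u = AW_u t"
  have uAW: "(u, t) \<in> AW" using AW_u_mem[OF assms(1)] by (simp add: u_def)
  then have uU: "(u, t) \<in> U" using in_U mem_AW_iff by auto
  obtain d where d: "d > 0" "\<forall>h>0. h < d \<longrightarrow> pv r (u + h, t) < pv r (u, t)"
    using DERIV_neg_dec_right[OF pv_r_has_deriv_u[OF uU] pu_pv_r_neg_on_AW[OF uAW]] by blast
  \<comment> \<open>the point \<open>(u + h, t)\<close> need not lie in \<open>G\<close>, so this argument works in \<open>U\<close>\<close>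
  obtain e where e: "e > 0" "ball (u, t) e \<subseteq> U"
    using U_open uU open_contains_ball by blast
  obtain h where h: "0 < h" "h < d" "h < min e (b - u)"
    using field_lbound_gt_zero[of d "min e (b - u)"] d(1) e(1) assms(2) u_def by auto
  have "(u + h, t) \<in> U" using e h by (auto simp: dist_Pair_Pair dist_real_def)
  moreover have "pv r (u + h, t) < 0" using d h uAW mem_AW_iff by auto
  ultimately have "\<forall>\<^sub>F t' in at t. pv r (u + h, t') < 0"
    using order_tendstoD(2)[OF pv_r_isCont_v[unfolded isCont_def]] by blast
  then have "\<forall>\<^sub>F t' in at t. t' \<in> AW_vs \<longrightarrow> AW_u t' < b"
  proof eventually_elim
    case (elim t')
    have "AW_u t' \<le> u + h" if "t' \<in> AW_vs"
      using pv_r_pos_left_of_AW[OF AW_u_mem[OF that], of "u + h"] elim h AW_vs_bounds[OF assms(1)]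
      unfolding u_def by force
    then show ?case using h by (auto simp: u_def)
  qed
  then show ?thesis unfolding eventually_at_filter by eventually_elim auto
qed

lemma AW_u_continuous: "continuous_on AW_vs AW_u"
  unfolding continuous_on_def
  by (intro ballI order_tendstoI AW_u_eventually_gt AW_u_eventually_lt)

lemma AW_connected: "connected AW"
proof -
  have "is_interval AW_vs" unfolding is_interval_1 using AW_vs_upward_closed by blast
  then have "connected AW_vs" by (rule is_interval_connected)
  moreover have "continuous_on AW_vs (\<lambda>t. (AW_u t, t))"
    by (intro continuous_on_Pair AW_u_continuous continuous_on_id)
  ultimately show ?thesis using AW_graph connected_continuous_image by metis
qed

definition AW_end :: real where
  "AW_end = Inf (AW_u ` AW_vs)"

lemma AW_end_le: "t \<in> AW_vs \<Longrightarrow> AW_end \<le> AW_u t"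
  unfolding AW_end_def using AW_vs_bounds by (intro cInf_lower bdd_belowI[of _ 0]) auto

lemma AW_end_bounds:
  assumes "AW \<noteq> {}"
  shows "0 \<le> AW_end" "AW_end \<le> u0"
proof -
  obtain t where "t \<in> AW_vs" using assms AW_graph by auto
  then show "0 \<le> AW_end"
    unfolding AW_end_def using AW_vs_bounds by (intro cInf_greatest) auto
  show "AW_end \<le> u0" using AW_end_le[OF \<open>t \<in> AW_vs\<close>] AW_vs_bounds[OF \<open>t \<in> AW_vs\<close>] by simp
qed

lemma AW_u_near_AW_end:
  assumes "AW \<noteq> {}" "\<epsilon> > 0"
  obtains V where "V \<in> AW_vs" "\<And>t. t \<in> AW_vs \<Longrightarrow> V \<le> t \<Longrightarrow> AW_u t < AW_end + \<epsilon>"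
proof -
  have "AW_u ` AW_vs \<noteq> {}" using assms(1) AW_graph by auto
  then obtain V where "V \<in> AW_vs" "AW_u V < AW_end + \<epsilon>"
    using cInf_less_iff[of "AW_u ` AW_vs" "AW_end + \<epsilon>"] assms(2) AW_vs_bounds
    unfolding AW_end_def by (force intro: bdd_belowI[of _ 0])
  then show ?thesis using AW_u_antimono by (intro that) force+
qed

lemma AW_terminates_at_AW_end:
  assumes "AW \<noteq> {}"
  shows "terminates_at AW AW_end"
  unfolding terminates_at_def
proof (intro conjI allI impI)
  fix V :: real
  obtain t where "t \<in> AW_vs" using assms AW_graph by auto
  then have "max V t \<in> AW_vs" using AW_vs_upward_closed by simp
  then show "\<exists>p\<in>AW. V \<le> snd p" using AW_u_mem by force
next
  fix \<epsilon> :: real assume "\<epsilon> > 0"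
  then obtain V where "\<And>t. t \<in> AW_vs \<Longrightarrow> V \<le> t \<Longrightarrow> AW_u t < AW_end + \<epsilon>"
    using AW_u_near_AW_end assms by blast
  then show "\<exists>V. \<forall>p\<in>AW. V \<le> snd p \<longrightarrow> \<bar>fst p - AW_end\<bar> < \<epsilon>"
    using AW_graph AW_end_le by (intro exI[of _ V]) force
qed

lemma AW_asymptotic_to_EH:
  assumes "AW \<noteq> {}" "AW_end = 0"
  shows "asymptotic_to_EH AW"
  unfolding asymptotic_to_EH_def
proof (intro allI impI)
  fix \<epsilon> V :: real assume "\<epsilon> > 0"
  then obtain V' where V': "V' \<in> AW_vs" "\<And>t. t \<in> AW_vs \<Longrightarrow> V' \<le> t \<Longrightarrow> AW_u t < \<epsilon>"
    using AW_u_near_AW_end[OF assms(1)] assms(2) by (metis add_0)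
  then have "max V' (V + 1) \<in> AW_vs" using AW_vs_upward_closed by simp
  then show "\<exists>p\<in>AW. fst p < \<epsilon> \<and> V < snd p"
    using V'(2) AW_u_mem by (intro bexI[of _ "(AW_u (max V' (V + 1)), max V' (V + 1))"]) auto
qed

lemma rectangle_left_of_AW:
  assumes "t \<in> AW_vs" "0 < u1" "u1 < AW_end"
  shows "Krect u1 t \<subseteq> W_set G r \<rho> \<delta> \<inter> regR G r"
proof
  fix p assume "p \<in> Krect u1 t"
  moreover obtain a b where "p = (a, b)" by force
  ultimately have p: "p = (a, b)" "0 \<le> a" "a \<le> u1" "t \<le> b" by (auto simp: Krect_def)
  then have "b \<in> AW_vs" using AW_vs_upward_closed assms(1) by blast
  then have "a < AW_u b" using AW_end_le p assms(3) by force
  then have R: "(a, b) \<in> regR G r" using regR_left_of_AW \<open>b \<in> AW_vs\<close> p by blast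
  have "\<rho> - \<delta> \<le> r (AW_u b, b)" using AW_u_mem \<open>b \<in> AW_vs\<close> mem_AW_iff by blast
  also have "\<dots> \<le> r (a, b)" using r_antimono_u[OF AW_u_in_G[OF \<open>b \<in> AW_vs\<close>]] p \<open>a < AW_u b\<close> by simp
  finally show "p \<in> W_set G r \<rho> \<delta> \<inter> regR G r" using R p by (auto simp: W_set_def regR_def)
qed

theorem AW_dichotomy:
  assumes "AW \<noteq> {}"
  shows "connected AW \<and>
         ((terminates_at AW 0 \<and> asymptotic_to_EH AW)
          \<or>
          (\<exists>ustar. 0 < ustar \<and> ustar \<le> u0 \<and> terminates_at AW ustar \<and>
             (\<exists>u1 v1. 0 < u1 \<and> u1 \<le> u0 \<and> v0 \<le> v1 \<and>
                Krect u1 v1 \<subseteq> W_set G r \<rho> \<delta> \<inter> regR G r)))"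
proof (cases "AW_end = 0")
  case True
  then show ?thesis using AW_connected AW_terminates_at_AW_end AW_asymptotic_to_EH assms by simp
next
  case False
  then have pos: "0 < AW_end" using AW_end_bounds[OF assms] by simp
  obtain t where "t \<in> AW_vs" using assms AW_graph by auto
  then have "Krect (AW_end / 2) t \<subseteq> W_set G r \<rho> \<delta> \<inter> regR G r" "v0 \<le> t"
    using rectangle_left_of_AW pos AW_vs_bounds by auto
  then show ?thesis
    using AW_connected AW_terminates_at_AW_end[OF assms] pos AW_end_bounds[OF assms] by fastforce
qed

end

theorem lemma1:
  fixes u0 v0 :: real and G :: "pt set"
    and \<Omega> r Tuu Tuv Tvv :: "pt \<Rightarrow> real" and \<delta> :: real
  assumes u0: "u0 > 0" and v0: "v0 > 0"
    and G_sub: "G \<subseteq> Krect u0 v0"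
    and G_open: "openin (top_of_set (Krect u0 v0)) G"
    and G_gh: "globally_hyperbolic G"
    and G_cont: "C_in u0 v0 \<union> C_out v0 \<subseteq> G"
    and sm: "smooth_on G \<Omega>" "smooth_on G r" "smooth_on G Tuu" "smooth_on G Tuv" "smooth_on G Tvv"
    and \<Omega>_pos: "\<forall>p\<in>G. \<Omega> p > 0"
    and r_nonneg: "\<forall>p\<in>G. r p \<ge> 0"
    and r_pos: "\<forall>p\<in>C_in u0 v0 \<union> C_out v0. r p > 0"
    and eq_uu: "\<forall>p\<in>G. pu (\<lambda>q. pu r q / (\<Omega> q)^2) p = - r p * Tuu p / (\<Omega> p)^2"
    and eq_vv: "\<forall>p\<in>G. pv (\<lambda>q. pv r q / (\<Omega> q)^2) p = - r p * Tvv p / (\<Omega> p)^2"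
    and eq_mu: "\<forall>p\<in>G. pu (hawking_mass \<Omega> r) p
                   = 2 * (r p)^2 / (\<Omega> p)^2 * (Tuv p * pu r p - Tuu p * pv r p)"
    and eq_mv: "\<forall>p\<in>G. pv (hawking_mass \<Omega> r) p
                   = 2 * (r p)^2 / (\<Omega> p)^2 * (Tuv p * pv r p - Tvv p * pu r p)"
    and I: "\<forall>p\<in>G. Tuu p \<ge> 0 \<and> Tuv p \<ge> 0 \<and> Tvv p \<ge> 0"
    and II: "\<forall>p\<in>G. J_minus u0 v0 p \<subseteq> G"
    and III: "bdd_above (r ` C_out v0)"
    and IV: "\<forall>p\<in>C_out v0. hawking_mass \<Omega> r p \<ge> 0" "bdd_above (hawking_mass \<Omega> r ` C_out v0)"
    and V: "\<forall>p\<in>C_out v0. pu r p < 0"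
    and VI: "\<forall>p\<in>C_out v0. pv r p > 0"
    and VII: "\<forall>p q. p \<in> closure (regR G r) \<inter> Krect u0 v0 \<longrightarrow>
                   q \<in> closure (regR G r) \<inter> Krect u0 v0 \<inter> I_minus u0 v0 p \<longrightarrow>
                   (J_minus u0 v0 p \<inter> J_plus u0 v0 q) - {p} \<subseteq> regR G r \<union> regA G r \<longrightarrow>
                   p \<in> regR G r \<union> regA G r"
    and \<delta>_pos: "\<delta> > 0"
    and A_cond: "\<forall>p\<in>regA G r \<inter> W_set G r (Sup (r ` C_out v0)) \<delta>.
                   Tuv p / (\<Omega> p)^2 < 1 / (4 * (r p)^2)"
    and nonempty: "regA G r \<inter> W_set G r (Sup (r ` C_out v0)) \<delta> \<noteq> {}"
  shows "connected (regA G r \<inter> W_set G r (Sup (r ` C_out v0)) \<delta>) \<and>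
         ((terminates_at (regA G r \<inter> W_set G r (Sup (r ` C_out v0)) \<delta>) 0 \<and>
           asymptotic_to_EH (regA G r \<inter> W_set G r (Sup (r ` C_out v0)) \<delta>))
          \<or>
          (\<exists>ustar. 0 < ustar \<and> ustar \<le> u0 \<and>
             terminates_at (regA G r \<inter> W_set G r (Sup (r ` C_out v0)) \<delta>) ustar \<and>
             (\<exists>u1 v1. 0 < u1 \<and> u1 \<le> u0 \<and> v0 \<le> v1 \<and>
                Krect u1 v1 \<subseteq> W_set G r (Sup (r ` C_out v0)) \<delta> \<inter> regR G r)))"
proof -
  obtain U1 where U1: "G \<subseteq> U1" "C_inf_on U1 \<Omega>" using sm(1) unfolding smooth_on_def by blast
  obtain U2 where U2: "G \<subseteq> U2" "C_inf_on U2 r" using sm(2) unfolding smooth_on_def by blast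
  have "open (U1 \<inter> U2)" using U1 U2 by (simp add: C_inf_on_def open_Int)
  then interpret L: apparent_horizon_region u0 v0 G "U1 \<inter> U2" \<Omega> r Tuu Tvv Tuv "Sup (r ` C_out v0)" \<delta>
    using C_inf_on_subset U1 U2 G_sub G_open G_cont \<Omega>_pos r_nonneg eq_uu eq_vv eq_mu I II V VI VII A_cond
    by unfold_locales auto
  show ?thesis using L.AW_dichotomy nonempty unfolding L.AW_def by blast
qed

end
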